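(* For every integer $m\ge 4$ with $m\ne 5$, $\chi_{ei}(C_m\square C_7)=4$.
   Context: All graphs are finite and simple. $C_k$ denotes the cycle on $k$ vertices. A path $P_4$ in $G$ is a sequence $uxyv$ of four distinct vertices with $ux,xy,yv\in E(G)$; $u,v$ are its end vertices. An $e$-injective $k$-coloring of $G$ is a function $f:V(G)\to\{1,\dots,k\}$ with $f(u)\ne f(v)$ whenever $u,v$ are the end vertices of some path $P_4$ in $G$; $\chi_{ei}(G)$ is the least such $k$. In the Cartesian product $G\square H$ two vertices are adjacent if they are adjacent in one coordinate and equal in the other. *)

theory Defs
  imports Main
begin

text \<open>A finite simple graph is given by a vertex set V and a symmetric,
irreflexive adjacency relation E (only its restriction to V matters).\<close>

definition cycle_verts :: "nat \<Rightarrow> nat set" where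
  "cycle_verts k = {0..<k}"

definition cycle_adj :: "nat \<Rightarrow> nat \<Rightarrow> nat \<Rightarrow> bool" where
  "cycle_adj k i j \<longleftrightarrow> i < k \<and> j < k \<and> (j = (i + 1) mod k \<or> i = (j + 1) mod k)"

definition cart_verts :: "'a set \<Rightarrow> 'b set \<Rightarrow> ('a \<times> 'b) set" where
  "cart_verts V W = V \<times> W"

definition cart_adj :: "('a \<Rightarrow> 'a \<Rightarrow> bool) \<Rightarrow> ('b \<Rightarrow> 'b \<Rightarrow> bool)
    \<Rightarrow> 'a \<times> 'b \<Rightarrow> 'a \<times> 'b \<Rightarrow> bool" where
  "cart_adj E F p q \<longleftrightarrow>
     (E (fst p) (fst q) \<and> snd p = snd q) \<or> (fst p = fst q \<and> F (snd p) (snd q))"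

definition P4_ends :: "'a set \<Rightarrow> ('a \<Rightarrow> 'a \<Rightarrow> bool) \<Rightarrow> 'a \<Rightarrow> 'a \<Rightarrow> bool" where
  "P4_ends V E u v \<longleftrightarrow> (\<exists>x y. u \<in> V \<and> x \<in> V \<and> y \<in> V \<and> v \<in> V \<and>
      distinct [u, x, y, v] \<and> E u x \<and> E x y \<and> E y v)"

definition e_injective_coloring :: "'a set \<Rightarrow> ('a \<Rightarrow> 'a \<Rightarrow> bool) \<Rightarrow> nat \<Rightarrow> ('a \<Rightarrow> nat) \<Rightarrow> bool" where
  "e_injective_coloring V E k f \<longleftrightarrow>
     (\<forall>v\<in>V. f v \<in> {1..k}) \<and> (\<forall>u v. P4_ends V E u v \<longrightarrow> f u \<noteq> f v)"

definition chi_ei :: "'a set \<Rightarrow> ('a \<Rightarrow> 'a \<Rightarrow> bool) \<Rightarrow> nat" where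
  "chi_ei V E = (LEAST k. \<exists>f. e_injective_coloring V E k f)"

end

theory Submission
  imports Defs
begin

(* Lower bound: on one copy {0} x C_7, vertices at distance 3 are the ends of a straight P4 and
   neighbours (0,j), (0,j+1) are the ends of the P4 around the square through (1,j). So a column
   must be properly coloured as the circulant C_7(1,3), whose independence number is 2; three
   colours cover at most six of its seven vertices.

   Upper bound: the ends of a P4 differ by a sum of three unit vectors, i.e. by an offset (e,d) with
   |e| + |d| in {1,3}. Colour (i,j) by entry j of row r(i) of a fixed 7 x 7 table, where r runs
   cyclically through 0101...01 for even m and 0101...01 23456 for odd m >= 7. As |e| <= 3, the
   colouring separates all such offsets as soon as every window of four cyclically consecutive
   values of r does; only eleven windows occur, and each is checked by computation. *)

abbreviation torus_verts :: "nat \<Rightarrow> nat \<Rightarrow> (nat \<times> nat) set" where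
  "torus_verts m n \<equiv> cart_verts (cycle_verts m) (cycle_verts n)"

abbreviation torus_adj :: "nat \<Rightarrow> nat \<Rightarrow> nat \<times> nat \<Rightarrow> nat \<times> nat \<Rightarrow> bool" where
  "torus_adj m n \<equiv> cart_adj (cycle_adj m) (cycle_adj n)"

lemma mem_torus_verts [simp]: "p \<in> torus_verts m n \<longleftrightarrow> fst p < m \<and> snd p < n"
  by (cases p) (auto simp: cart_verts_def cycle_verts_def)

lemma torus_adj_sym: "torus_adj m n p q \<Longrightarrow> torus_adj m n q p"
  by (auto simp: cart_adj_def cycle_adj_def)

lemma torus_adj_vertical: "i < m \<Longrightarrow> j < n \<Longrightarrow> torus_adj m n (i, j) (i, Suc j mod n)"
  by (simp add: cart_adj_def cycle_adj_def)

lemma torus_adj_horizontal: "i < m \<Longrightarrow> j < n \<Longrightarrow> torus_adj m n (i, j) (Suc i mod m, j)"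
  by (simp add: cart_adj_def cycle_adj_def)

lemma P4_ends_torus_vertical:
  assumes "i < m" "j < n" "4 \<le> n"
  shows "P4_ends (torus_verts m n) (torus_adj m n) (i, j) (i, (j + 3) mod n)"
proof -
  let ?x = "(i, Suc j mod n)" and ?y = "(i, Suc (Suc j) mod n)"
  have step: "torus_adj m n (i, k mod n) (i, Suc k mod n)" for k
    using torus_adj_vertical[of i m "k mod n" n] assms by (simp add: mod_Suc_eq)
  have "torus_adj m n (i, j) ?x" "torus_adj m n ?x ?y" "torus_adj m n ?y (i, (j + 3) mod n)"
    using step[of j] step[of "Suc j"] step[of "Suc (Suc j)"] assms(2) by (simp_all add: numeral_3_eq_3)
  moreover have "distinct [j, Suc j mod n, Suc (Suc j) mod n, (j + 3) mod n]"
    using assms by (auto simp: mod_if)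
  then have "distinct [(i, j), ?x, ?y, (i, (j + 3) mod n)]"
    by simp
  moreover have "(i, j) \<in> torus_verts m n" "?x \<in> torus_verts m n" "?y \<in> torus_verts m n"
      "(i, (j + 3) mod n) \<in> torus_verts m n"
    using assms by simp_all
  ultimately show ?thesis
    unfolding P4_ends_def by blast
qed

lemma P4_ends_torus_square:
  assumes "i < m" "j < n" "2 \<le> m" "2 \<le> n"
  shows "P4_ends (torus_verts m n) (torus_adj m n) (i, j) (i, Suc j mod n)"
proof -
  let ?x = "(Suc i mod m, j)" and ?y = "(Suc i mod m, Suc j mod n)"
  have "Suc i mod m \<noteq> i" "Suc j mod n \<noteq> j"
    using assms by (auto simp: mod_if)
  then have "distinct [(i, j), ?x, ?y, (i, Suc j mod n)]"
    by auto
  moreover have "torus_adj m n (i, j) ?x" "torus_adj m n ?x ?y" "torus_adj m n ?y (i, Suc j mod n)"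
    using assms torus_adj_horizontal[of i m "Suc j mod n" n]
    by (auto intro: torus_adj_vertical torus_adj_horizontal torus_adj_sym)
  moreover have "(i, j) \<in> torus_verts m n" "?x \<in> torus_verts m n" "?y \<in> torus_verts m n"
      "(i, Suc j mod n) \<in> torus_verts m n"
    using assms by simp_all
  ultimately show ?thesis
    unfolding P4_ends_def by blast
qed

lemma circulant_C7_1_3_not_3_colourable:
  fixes c :: "nat \<Rightarrow> nat"
  assumes colours: "\<And>j. j < 7 \<Longrightarrow> c j \<in> {1..3}"
    and dist1: "\<And>j. j < 7 \<Longrightarrow> c j \<noteq> c (Suc j mod 7)"
    and dist3: "\<And>j. j < 7 \<Longrightarrow> c j \<noteq> c ((j + 3) mod 7)"
  shows False
proof -
  have ne1: "c j \<noteq> c k" if "j < 7" "k = Suc j mod 7" for j k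
    using dist1 that by simp
  have ne3: "c j \<noteq> c k" if "j < 7" "k = (j + 3) mod 7" for j k
    using dist3 that by simp
  have ne: "c 0 \<noteq> c 1" "c 1 \<noteq> c 2" "c 2 \<noteq> c 3" "c 3 \<noteq> c 4" "c 4 \<noteq> c 5" "c 5 \<noteq> c 6" "c 6 \<noteq> c 0"
    "c 0 \<noteq> c 3" "c 1 \<noteq> c 4" "c 2 \<noteq> c 5" "c 3 \<noteq> c 6" "c 4 \<noteq> c 0" "c 5 \<noteq> c 1" "c 6 \<noteq> c 2"
    by (rule ne1 ne3; simp)+
  have same_colour: "c x = c y"
    if "c p \<noteq> c q" "c x \<noteq> c p" "c x \<noteq> c q" "c y \<noteq> c p" "c y \<noteq> c q"
      "x < 7" "y < 7" "p < 7" "q < 7" for x y p q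
    using that colours[of x] colours[of y] colours[of p] colours[of q] by auto
  \<comment> \<open>0, 1, 4 form a triangle, which forces the remaining colours until 6 has none left.\<close>
  have "c 5 = c 0" by (rule same_colour[of 1 4]) (use ne in auto)
  moreover have "c 3 = c 1" by (rule same_colour[of 0 4]) (use ne in auto)
  moreover have "c 2 = c 4" by (rule same_colour[of 1 5]) (use ne in auto)
  ultimately show False
    using colours[of 6] colours[of 0] colours[of 1] colours[of 4] ne by auto
qed

lemma e_injective_coloring_torus_7_ge_4:
  assumes "2 \<le> m" and f: "e_injective_coloring (torus_verts m 7) (torus_adj m 7) k f"
  shows "4 \<le> k"
proof (rule ccontr)
  assume "\<not> 4 \<le> k"
  have P4_ends_distinct: "f u \<noteq> f v" if "P4_ends (torus_verts m 7) (torus_adj m 7) u v" for u v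
    using f that unfolding e_injective_coloring_def by blast
  show False
  proof (rule circulant_C7_1_3_not_3_colourable)
    fix j :: nat assume "j < 7"
    then show "f (0, j) \<in> {1..3}"
      using f \<open>\<not> 4 \<le> k\<close> assms(1) unfolding e_injective_coloring_def by fastforce
    show "f (0, j) \<noteq> f (0, Suc j mod 7)"
      using P4_ends_distinct P4_ends_torus_square \<open>j < 7\<close> assms(1) by simp
    show "f (0, j) \<noteq> f (0, (j + 3) mod 7)"
      using P4_ends_distinct P4_ends_torus_vertical \<open>j < 7\<close> assms(1) by simp
  qed
qed

definition torus_shift :: "nat \<Rightarrow> nat \<Rightarrow> nat \<times> nat \<Rightarrow> int \<Rightarrow> int \<Rightarrow> nat \<times> nat \<Rightarrow> bool" where
  "torus_shift m n p e d q \<longleftrightarrow>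
     int (fst q) = (int (fst p) + e) mod int m \<and> int (snd q) = (int (snd p) + d) mod int n"

lemma torus_shift_trans:
  "torus_shift m n p e d q \<Longrightarrow> torus_shift m n q e' d' r \<Longrightarrow> torus_shift m n p (e + e') (d + d') r"
  by (simp add: torus_shift_def mod_add_left_eq add.assoc)

lemma torus_shift_sym:
  assumes "p \<in> torus_verts m n" "torus_shift m n p e d q"
  shows "torus_shift m n q (- e) (- d) p"
  using assms by (simp add: torus_shift_def mod_diff_left_eq)

lemma cycle_adj_unit_step:
  assumes "cycle_adj k a b"
  shows "\<exists>e. \<bar>e\<bar> = 1 \<and> int b = (int a + e) mod int k"
proof -
  have ab: "b < k" "b = Suc a mod k \<or> a = Suc b mod k"
    using assms by (auto simp: cycle_adj_def)
  from ab(2) show ?thesis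
  proof
    assume "b = Suc a mod k"
    then have "int b = (int a + 1) mod int k" by (simp add: of_nat_mod add.commute)
    then show ?thesis by (intro exI[of _ 1]) simp
  next
    assume "a = Suc b mod k"
    then have "(int a + (- 1)) mod int k = (int b + 1 - 1) mod int k"
      by (simp add: of_nat_mod mod_diff_left_eq add.commute)
    then show ?thesis using ab(1) by (intro exI[of _ "- 1"]) simp
  qed
qed

lemma torus_adj_unit_shift:
  assumes "torus_adj m n p q" "p \<in> torus_verts m n"
  shows "\<exists>e d. \<bar>e\<bar> + \<bar>d\<bar> = 1 \<and> torus_shift m n p e d q"
  using assms(1) unfolding cart_adj_def
proof (elim disjE conjE)
  assume "cycle_adj m (fst p) (fst q)" "snd p = snd q"
  then obtain e where "\<bar>e\<bar> = 1" "int (fst q) = (int (fst p) + e) mod int m"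
    using cycle_adj_unit_step by blast
  moreover have "int (snd q) = (int (snd p) + 0) mod int n"
    using assms(2) \<open>snd p = snd q\<close> by simp
  ultimately show ?thesis
    unfolding torus_shift_def by (intro exI[of _ e] exI[of _ 0]) simp
next
  assume "fst p = fst q" "cycle_adj n (snd p) (snd q)"
  then obtain d where "\<bar>d\<bar> = 1" "int (snd q) = (int (snd p) + d) mod int n"
    using cycle_adj_unit_step by blast
  moreover have "int (fst q) = (int (fst p) + 0) mod int m"
    using assms(2) \<open>fst p = fst q\<close> by simp
  ultimately show ?thesis
    unfolding torus_shift_def by (intro exI[of _ 0] exI[of _ d]) simp
qed

definition P4_offset :: "int \<Rightarrow> int \<Rightarrow> bool" where
  "P4_offset e d \<longleftrightarrow> \<bar>e\<bar> + \<bar>d\<bar> \<in> {1, 3}"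

lemma unit_vector_cases:
  "\<bar>e\<bar> + \<bar>d\<bar> = 1 \<Longrightarrow> (e = 1 \<or> e = -1) \<and> d = 0 \<or> e = 0 \<and> (d = 1 \<or> d = -1)" for e d :: int
  by arith

lemma P4_offset_three_unit_steps:
  assumes "\<bar>e1\<bar> + \<bar>d1\<bar> = 1" "\<bar>e2\<bar> + \<bar>d2\<bar> = 1" "\<bar>e3\<bar> + \<bar>d3\<bar> = 1"
  shows "P4_offset (e1 + e2 + e3) (d1 + d2 + d3)"
  using unit_vector_cases[OF assms(1)] unit_vector_cases[OF assms(2)] unit_vector_cases[OF assms(3)]
  unfolding P4_offset_def by auto

lemma P4_ends_torus_shift:
  assumes "P4_ends (torus_verts m n) (torus_adj m n) u v"
  shows "\<exists>e d. P4_offset e d \<and> torus_shift m n u e d v"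
proof -
  obtain x y where path: "u \<in> torus_verts m n" "x \<in> torus_verts m n" "y \<in> torus_verts m n"
      "torus_adj m n u x" "torus_adj m n x y" "torus_adj m n y v"
    using assms unfolding P4_ends_def by blast
  obtain e1 d1 e2 d2 e3 d3 where
      "\<bar>e1\<bar> + \<bar>d1\<bar> = 1" "torus_shift m n u e1 d1 x"
      "\<bar>e2\<bar> + \<bar>d2\<bar> = 1" "torus_shift m n x e2 d2 y"
      "\<bar>e3\<bar> + \<bar>d3\<bar> = 1" "torus_shift m n y e3 d3 v"
    using path torus_adj_unit_shift by meson
  then show ?thesis
    by (meson P4_offset_three_unit_steps torus_shift_trans)
qed

definition colour_table :: "nat list list" where
  "colour_table =
     [[1, 3, 2, 4, 2, 4, 3], [3, 1, 4, 2, 4, 2, 1], [1, 3, 1, 4, 2, 4, 2], [2, 1, 3, 1, 4, 2, 4],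
      [4, 2, 1, 3, 1, 3, 2], [2, 4, 2, 1, 3, 1, 3], [3, 2, 4, 2, 1, 3, 1]]"

lemma colour_table_range: "t < 7 \<Longrightarrow> j < 7 \<Longrightarrow> colour_table ! t ! j \<in> {1..4}"
proof -
  have "\<forall>t\<in>set [0..<7]. \<forall>j\<in>set [0..<7]. colour_table ! t ! j \<in> set [1..<5]"
    unfolding colour_table_def by code_simp
  then show "t < 7 \<Longrightarrow> j < 7 \<Longrightarrow> colour_table ! t ! j \<in> {1..4}"
    by force
qed

definition row_pattern :: "nat \<Rightarrow> nat \<Rightarrow> nat" where
  "row_pattern m i = (if even m \<or> i < m - 5 then i mod 2 else i + 7 - m)"

definition window :: "nat \<Rightarrow> nat \<Rightarrow> nat list" where
  "window m i = map (\<lambda>k. row_pattern m ((i + k) mod m)) [0..<4]"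

definition admissible_windows :: "nat list set" where
  "admissible_windows = {[0,1,0,1], [1,0,1,0], [1,0,1,2], [0,1,2,3], [1,2,3,4], [2,3,4,5],
     [3,4,5,6], [4,5,6,0], [5,6,0,1], [6,0,1,0], [6,0,1,2]}"

lemma window_alternating:
  assumes "\<And>k. k < 4 \<Longrightarrow> row_pattern m ((i + k) mod m) = (i + k) mod 2"
  shows "window m i \<in> admissible_windows"
proof -
  have "window m i = map (\<lambda>k. (i + k) mod 2) [0..<4]"
    unfolding window_def by (rule map_cong) (simp_all add: assms)
  also have "\<dots> = (if even i then [0, 1, 0, 1] else [1, 0, 1, 0])"
    by (simp add: upt_rec mod_Suc even_iff_mod_2_eq_zero)
  finally show ?thesis
    by (simp add: admissible_windows_def)
qed

lemma window_admissible_even: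
  assumes "even m" "i < m"
  shows "window m i \<in> admissible_windows"
  using assms by (intro window_alternating) (simp add: row_pattern_def mod_mod_cancel)

lemma row_pattern_odd_tail:
  assumes "m = 2 * n + 7" "x + 8 = m + s" "s < 11"
  shows "row_pattern m (x mod m) =
    ([1, 0, 1, 2, 3, 4, 5, 6] @ (if n = 0 then [0, 1, 2] else [0, 1, 0])) ! s"
proof (cases "s < 8")
  case True
  then have "x mod m = x" using assms by simp
  have parity: "x mod 2 = Suc s mod 2" using assms by presburger
  have "s = 0 \<or> s = 1 \<or> s = 2 \<or> s = 3 \<or> s = 4 \<or> s = 5 \<or> s = 6 \<or> s = 7"
    using True by linarith
  then show ?thesis
    using assms \<open>x mod m = x\<close> by (elim disjE) (auto simp: row_pattern_def nth_append parity)
next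
  case False
  then have "x mod m = s - 8" using assms by (simp add: le_mod_geq)
  moreover have "s = 8 \<or> s = 9 \<or> s = 10"
    using False assms(3) by linarith
  ultimately show ?thesis
    using assms by (elim disjE) (auto simp: row_pattern_def nth_append)
qed

lemma window_admissible_odd:
  assumes "odd m" "7 \<le> m" "i < m"
  shows "window m i \<in> admissible_windows"
proof (cases "i + 3 < m - 5")
  case True
  then show ?thesis
    by (intro window_alternating) (simp add: row_pattern_def)
next
  case False
  have "even (m - 7)"
    using assms(1,2) by simp
  then obtain n where "m - 7 = 2 * n"
    by (rule evenE)
  then have n: "m = 2 * n + 7"
    using assms(2) by simp
  define r where "r = i + 8 - m"
  have r: "i + 8 = m + r" "r < 8"
    using False assms(3) unfolding r_def by arith+
  \<comment> \<open>the pattern at positions \<open>m - 8, \<dots>, m - 1\<close>, then (wrapping around) at 0, 1, 2;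
    for \<open>m = 7\<close> position 2 already belongs to the block 23456\<close>
  define tail :: "nat list" where
    "tail = [1, 0, 1, 2, 3, 4, 5, 6] @ (if n = 0 then [0, 1, 2] else [0, 1, 0])"
  have "window m i = map (\<lambda>k. tail ! (r + k)) [0..<4]"
    unfolding window_def
  proof (rule map_cong[OF refl])
    fix k assume "k \<in> set [0..<4]"
    then show "row_pattern m ((i + k) mod m) = tail ! (r + k)"
      unfolding tail_def using r by (intro row_pattern_odd_tail[OF n]) auto
  qed
  moreover have "map (\<lambda>k. tail ! (r + k)) [0..<4] \<in> admissible_windows"
  proof -
    have "r = 0 \<or> r = 1 \<or> r = 2 \<or> r = 3 \<or> r = 4 \<or> r = 5 \<or> r = 6 \<or> r = 7"
      using r(2) by linarith
    then show ?thesis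
      by (elim disjE) (simp_all add: tail_def admissible_windows_def upt_rec)
  qed
  ultimately show ?thesis
    by simp
qed

lemma window_admissible: "even m \<or> 7 \<le> m \<Longrightarrow> i < m \<Longrightarrow> window m i \<in> admissible_windows"
  using window_admissible_even window_admissible_odd by blast

definition good_window :: "nat list \<Rightarrow> bool" where
  "good_window w \<longleftrightarrow> (\<forall>e\<in>{0..3}. \<forall>d\<in>{-3..3}. P4_offset e d \<longrightarrow>
     (\<forall>j<7. colour_table ! (w ! 0) ! j \<noteq> colour_table ! (w ! nat e) ! nat ((int j + d) mod 7)))"

lemma admissible_window_good: "w \<in> admissible_windows \<Longrightarrow> good_window w"
proof -
  have "\<forall>w\<in>admissible_windows. good_window w"
    unfolding good_window_def admissible_windows_def P4_offset_def colour_table_def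
      set_upto[symmetric]
    by code_simp
  then show "w \<in> admissible_windows \<Longrightarrow> good_window w"
    by blast
qed

definition torus_colouring :: "nat \<Rightarrow> nat \<times> nat \<Rightarrow> nat" where
  "torus_colouring m p = colour_table ! row_pattern m (fst p) ! snd p"

lemma torus_colouring_range:
  "p \<in> torus_verts m 7 \<Longrightarrow> torus_colouring m p \<in> {1..4}"
  unfolding torus_colouring_def row_pattern_def by (intro colour_table_range) auto

lemma torus_colouring_separates:
  assumes "even m \<or> 7 \<le> m" "p \<in> torus_verts m 7" "torus_shift m 7 p e d q"
    "P4_offset e d" "0 \<le> e"
  shows "torus_colouring m p \<noteq> torus_colouring m q"
proof -
  obtain i j where p: "p = (i, j)" "i < m" "j < 7"
    using assms(2) by (cases p) auto
  have ed: "e \<in> {0..3}" "d \<in> {-3..3}"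
    using assms(4,5) unfolding P4_offset_def by auto
  have "int (fst q) = int ((i + nat e) mod m)" "int (snd q) = (int j + d) mod 7"
    using assms(3,5) p(1) unfolding torus_shift_def by (simp_all add: of_nat_mod)
  then have q: "fst q = (i + nat e) mod m" "snd q = nat ((int j + d) mod 7)"
    by (simp_all flip: nat_int)
  define w where "w = window m i"
  have "good_window w"
    unfolding w_def using assms(1) p(2) by (intro admissible_window_good window_admissible)
  then have "colour_table ! (w ! 0) ! j \<noteq> colour_table ! (w ! nat e) ! nat ((int j + d) mod 7)"
    using ed assms(4) p(3) unfolding good_window_def by blast
  moreover have "w ! 0 = row_pattern m i" "w ! nat e = row_pattern m ((i + nat e) mod m)"
    using p(2) ed(1) unfolding w_def window_def by auto
  ultimately show ?thesis
    unfolding torus_colouring_def p(1) q by simp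
qed

lemma e_injective_torus_colouring:
  assumes "even m \<or> 7 \<le> m"
  shows "e_injective_coloring (torus_verts m 7) (torus_adj m 7) 4 (torus_colouring m)"
  unfolding e_injective_coloring_def
proof (intro conjI ballI allI impI)
  fix p assume "p \<in> torus_verts m 7"
  then show "torus_colouring m p \<in> {1..4}"
    by (rule torus_colouring_range)
next
  fix u v assume P4: "P4_ends (torus_verts m 7) (torus_adj m 7) u v"
  then have verts: "u \<in> torus_verts m 7" "v \<in> torus_verts m 7"
    unfolding P4_ends_def by blast+
  obtain e d where shift: "P4_offset e d" "torus_shift m 7 u e d v"
    using P4_ends_torus_shift[OF P4] by blast
  show "torus_colouring m u \<noteq> torus_colouring m v"
  proof (cases "0 \<le> e")
    case True
    then show ?thesis
      using torus_colouring_separates assms verts shift by blast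
  next
    case False
    have "P4_offset (- e) (- d)" "torus_shift m 7 v (- e) (- d) u"
      using shift verts(1) torus_shift_sym by (auto simp: P4_offset_def)
    then show ?thesis
      using torus_colouring_separates[of m v "- e" "- d" u] assms verts False by auto
  qed
qed

theorem theorem4p9:
  fixes m :: nat
  assumes "m \<ge> 4" and "m \<noteq> 5"
  shows "chi_ei (cart_verts (cycle_verts m) (cycle_verts 7))
                (cart_adj (cycle_adj m) (cycle_adj 7)) = 4"
  unfolding chi_ei_def
proof (rule Least_equality)
  have "even m \<or> 7 \<le> m"
    using assms by presburger
  then show "\<exists>f. e_injective_coloring (torus_verts m 7) (torus_adj m 7) 4 f"
    using e_injective_torus_colouring by blast
next
  fix k assume "\<exists>f. e_injective_coloring (torus_verts m 7) (torus_adj m 7) k f"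
  moreover have "2 \<le> m"
    using assms(1) by simp
  ultimately show "4 \<le> k"
    using e_injective_coloring_torus_7_ge_4 by blast
qed

end
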